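(* Let $\xi,\zeta$ be stoups, $\Pi,\Gamma_1,\Gamma_2$ finite sequences of tree terms, $A,C$ formulae and $\Xi(\cdot)$ a meta-formula context. If the sequents $\xi;\Pi\to A$ and $\Xi(\zeta;\Gamma_1,A,\Gamma_2)\to C$ are derivable in the calculus $\mathcal{M}'_{2015}$ defined below, then the sequent $\Xi(\xi,\zeta;\Gamma_1,\Pi,\Gamma_2)\to C$ is also derivable in $\mathcal{M}'_{2015}$.
   Context: Formulae are built from a countable set of variables and the constant $\mathbf{1}$ by the binary connectives $\backslash$, $/$, $\cdot$, $\wedge$, $\vee$ and the unary connectives $\langle\rangle$, $[]^{-1}$ (bracket modalities) and $!$ (subexponential). A stoup is a finite multiset of formulae ($\varnothing$ is the empty stoup). A tree term is either a formula or an expression $[\Xi]$ with $\Xi$ a meta-formula; a meta-formula is an expression $\zeta;\Gamma$ where $\zeta$ is a stoup and $\Gamma$ is a finite linearly ordered sequence of tree terms (the empty sequence is written $\Lambda$); $\varnothing;\Gamma$ is written simply $\Gamma$. Comma denotes both concatenation of sequences and multiset union of stoups; $\zeta,A$ is $\zeta$ with one more copy of $A$. A sequent is $\Xi\to C$ with $\Xi$ a meta-formula and $C$ a formula. $\Xi(\Theta)$ denotes a meta-formula with a designated occurrence of a meta-formula $\Theta$, which is either $\Xi$ itself or the content of some bracket $[\Theta]$ occurring at any depth in $\Xi$; $\Xi(\Theta')$ is the result of replacing that occurrence by $\Theta'$. Below $A,B,C,D,A_1,A_2$ are formulae, $\Gamma,\Delta,\Delta_i,\Gamma_i$ sequences of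 tree terms, $\zeta,\zeta',\zeta_i$ stoups, $\Xi$ a meta-formula. Common axioms and rules: axioms $A\to A$ and $\Lambda\to\mathbf 1$; ($/L$) from $\zeta_1;\Gamma\to B$ and $\Xi(\zeta_2;\Delta_1,C,\Delta_2)\to D$ infer $\Xi(\zeta_1,\zeta_2;\Delta_1,C/B,\Gamma,\Delta_2)\to D$; ($/R$) from $\zeta;\Gamma,B\to C$ infer $\zeta;\Gamma\to C/B$; ($\backslash L$) from $\zeta_1;\Gamma\to A$ and $\Xi(\zeta_2;\Delta_1,C,\Delta_2)\to D$ infer $\Xi(\zeta_1,\zeta_2;\Delta_1,\Gamma,A\backslash C,\Delta_2)\to D$; ($\backslash R$) from $\zeta;A,\Gamma\to C$ infer $\zeta;\Gamma\to A\backslash C$; ($\cdot L$) from $\Xi(\zeta;\Delta_1,A,B,\Delta_2)\to D$ infer $\Xi(\zeta;\Delta_1,A\cdot B,\Delta_2)\to D$; ($\cdot R$) from $\zeta_1;\Delta\to A$ and $\zeta_2;\Gamma\to B$ infer $\zeta_1,\zeta_2;\Delta,\Gamma\to A\cdot B$; ($\mathbf1 L$) from $\Xi(\zeta;\Delta_1,\Delta_2)\to A$ infer $\Xi(\zeta;\Delta_1,\mathbf1,\Delta_2)\to A$; ($\vee L$) from $\Xi(\zeta;\Delta_1,A_1,\Delta_2)\to C$ and $\Xi(\zeta;\Delta_1,A_2,\Delta_2)\to C$ infer $\Xi(\zeta;\Delta_1,A_1\vee A_2,\Delta_2)\to C$; ($\vee R_i$, $i=1,2$) from $\Xi\to A_i$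 infer $\Xi\to A_1\vee A_2$; ($\wedge L_i$) from $\Xi(\zeta;\Delta_1,A_i,\Delta_2)\to C$ infer $\Xi(\zeta;\Delta_1,A_1\wedge A_2,\Delta_2)\to C$; ($\wedge R$) from $\Xi\to A_1$ and $\Xi\to A_2$ infer $\Xi\to A_1\wedge A_2$; ($[]^{-1}L$) from $\Xi(\zeta;\Delta_1,A,\Delta_2)\to B$ infer $\Xi(\zeta;\Delta_1,[[]^{-1}A],\Delta_2)\to B$; ($[]^{-1}R$) from $[\Xi]\to A$ infer $\Xi\to []^{-1}A$; ($\langle\rangle L$) from $\Xi(\zeta;\Delta_1,[A],\Delta_2)\to B$ infer $\Xi(\zeta;\Delta_1,\langle\rangle A,\Delta_2)\to B$; ($\langle\rangle R$) from $\Xi\to A$ infer $[\Xi]\to\langle\rangle A$; ($!L$) from $\Xi(\zeta,A;\Gamma_1,\Gamma_2)\to B$ infer $\Xi(\zeta;\Gamma_1,!A,\Gamma_2)\to B$; ($!P$) from $\Xi(\zeta;\Gamma_1,A,\Gamma_2)\to B$ infer $\Xi(\zeta,A;\Gamma_1,\Gamma_2)\to B$. The calculus $\mathcal{M}'_{2015}$ consists of the common axioms and rules together with ($!R'$) from $\zeta;\Lambda\to B$ infer $\zeta;\Lambda\to !B$, provided $\zeta\neq\varnothing$, and ($!C'$) from $\Xi(\zeta_1,\zeta_2;\Gamma_1,[\zeta',\zeta_2;\Gamma_2],\Gamma_3)\to C$ infer $\Xi(\zeta_1,\zeta_2,\zeta';\Gamma_1,\Gamma_2,\Gamma_3)\to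 C$, provided $\zeta_2\neq\varnothing$. Cut is not a rule of the calculus; "derivable" means derivable by the listed axioms and rules. *)

theory Defs
  imports "HOL-Library.Multiset"
begin

datatype fm =
    Var nat
  | One
  | LDiv fm fm   (* LDiv A C  =  A \ C *)
  | RDiv fm fm   (* RDiv C B  =  C / B *)
  | Prod fm fm
  | Conj fm fm
  | Disj fm fm
  | Diam fm
  | BoxInv fm
  | Bang fm

text \<open>Tree terms and meta-formulae (stoup = multiset of formulae; sequence = list).\<close>
datatype tree = TF fm | Br meta
     and meta = Meta "fm multiset" "tree list"

text \<open>Contexts Xi(.): the hole is either the whole meta-formula or the content
  of a bracket at any depth.\<close>
datatype ctx = Hole | In "fm multiset" "tree list" ctx "tree list"

fun fill :: "ctx \<Rightarrow> meta \<Rightarrow> meta" where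
  "fill Hole T = T"
| "fill (In z G1 X G2) T = Meta z (G1 @ [Br (fill X T)] @ G2)"

inductive deriv :: "meta \<Rightarrow> fm \<Rightarrow> bool" where
  ax: "deriv (Meta {#} [TF A]) A"
| oneR: "deriv (Meta {#} []) One"
| rdivL: "\<lbrakk> deriv (Meta z1 G) B; deriv (fill X (Meta z2 (D1 @ [TF C] @ D2))) D \<rbrakk>
     \<Longrightarrow> deriv (fill X (Meta (z1 + z2) (D1 @ [TF (RDiv C B)] @ G @ D2))) D"
| rdivR: "deriv (Meta z (G @ [TF B])) C \<Longrightarrow> deriv (Meta z G) (RDiv C B)"
| ldivL: "\<lbrakk> deriv (Meta z1 G) A; deriv (fill X (Meta z2 (D1 @ [TF C] @ D2))) D \<rbrakk>
     \<Longrightarrow> deriv (fill X (Meta (z1 + z2) (D1 @ G @ [TF (LDiv A C)] @ D2))) D"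
| ldivR: "deriv (Meta z (TF A # G)) C \<Longrightarrow> deriv (Meta z G) (LDiv A C)"
| prodL: "deriv (fill X (Meta z (D1 @ [TF A, TF B] @ D2))) D
     \<Longrightarrow> deriv (fill X (Meta z (D1 @ [TF (Prod A B)] @ D2))) D"
| prodR: "\<lbrakk> deriv (Meta z1 D) A; deriv (Meta z2 G) B \<rbrakk>
     \<Longrightarrow> deriv (Meta (z1 + z2) (D @ G)) (Prod A B)"
| oneL: "deriv (fill X (Meta z (D1 @ D2))) A
     \<Longrightarrow> deriv (fill X (Meta z (D1 @ [TF One] @ D2))) A"
| disjL: "\<lbrakk> deriv (fill X (Meta z (D1 @ [TF A1] @ D2))) C;
            deriv (fill X (Meta z (D1 @ [TF A2] @ D2))) C \<rbrakk>
     \<Longrightarrow> deriv (fill X (Meta z (D1 @ [TF (Disj A1 A2)] @ D2))) C"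
| disjR1: "deriv M A1 \<Longrightarrow> deriv M (Disj A1 A2)"
| disjR2: "deriv M A2 \<Longrightarrow> deriv M (Disj A1 A2)"
| conjL1: "deriv (fill X (Meta z (D1 @ [TF A1] @ D2))) C
     \<Longrightarrow> deriv (fill X (Meta z (D1 @ [TF (Conj A1 A2)] @ D2))) C"
| conjL2: "deriv (fill X (Meta z (D1 @ [TF A2] @ D2))) C
     \<Longrightarrow> deriv (fill X (Meta z (D1 @ [TF (Conj A1 A2)] @ D2))) C"
| conjR: "\<lbrakk> deriv M A1; deriv M A2 \<rbrakk> \<Longrightarrow> deriv M (Conj A1 A2)"
| boxinvL: "deriv (fill X (Meta z (D1 @ [TF A] @ D2))) B
     \<Longrightarrow> deriv (fill X (Meta z (D1 @ [Br (Meta {#} [TF (BoxInv A)])] @ D2))) B"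
| boxinvR: "deriv (Meta {#} [Br M]) A \<Longrightarrow> deriv M (BoxInv A)"
| diamL: "deriv (fill X (Meta z (D1 @ [Br (Meta {#} [TF A])] @ D2))) B
     \<Longrightarrow> deriv (fill X (Meta z (D1 @ [TF (Diam A)] @ D2))) B"
| diamR: "deriv M A \<Longrightarrow> deriv (Meta {#} [Br M]) (Diam A)"
| bangL: "deriv (fill X (Meta (z + {#A#}) (G1 @ G2))) B
     \<Longrightarrow> deriv (fill X (Meta z (G1 @ [TF (Bang A)] @ G2))) B"
| bangP: "deriv (fill X (Meta z (G1 @ [TF A] @ G2))) B
     \<Longrightarrow> deriv (fill X (Meta (z + {#A#}) (G1 @ G2))) B"
| bangR': "\<lbrakk> deriv (Meta z []) B; z \<noteq> {#} \<rbrakk> \<Longrightarrow> deriv (Meta z []) (Bang B)"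
| bangC': "\<lbrakk> deriv (fill X (Meta (z1 + z2) (G1 @ [Br (Meta (z' + z2) G2)] @ G3))) C; z2 \<noteq> {#} \<rbrakk>
     \<Longrightarrow> deriv (fill X (Meta (z1 + z2 + z') (G1 @ G2 @ G3))) C"

end

theory Submission
  imports Defs
begin

text \<open>
  Cut is admissible for every formula \<open>A\<close>: by induction on the size of \<open>A\<close> and, for fixed \<open>A\<close>,
  on the derivation of the left premise \<open>\<xi>;\<Pi> \<rightarrow> A\<close>. If that derivation ends with a left rule,
  the cut moves up into its premises. If it ends with the right rule introducing \<open>A\<close>, a second
  induction, on the derivation of the right premise, moves the cut up until \<open>A\<close> is principal
  there too, and it is then replaced by cuts on the immediate subformulas of \<open>A\<close>.

  Only the subexponential is not local: a principal cut on \<open>!A\<close> against \<open>(!L)\<close> puts \<open>A\<close> into a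
  stoup, from where \<open>(!C')\<close> may copy it into any number of brackets. So \<open>\<xi>\<close> is substituted for
  arbitrarily many copies of \<open>A\<close> in all stoups at once; each copy later moved out of a stoup by
  \<open>(!P)\<close> then gives a cut on the smaller formula \<open>A\<close>.
\<close>

section \<open>Substituting a meta-formula for an occurrence of a formula\<close>

fun ctx_comp :: "ctx \<Rightarrow> ctx \<Rightarrow> ctx" where
  "ctx_comp Hole Y = Y"
| "ctx_comp (In z G1 X G2) Y = In z G1 (ctx_comp X Y) G2"

lemma fill_ctx_comp: "fill (ctx_comp X Y) M = fill X (fill Y M)"
  by (induction X) auto

text \<open>\<open>repl_meta A N M M'\<close>: \<open>N = Meta \<xi> \<Pi>\<close> is substituted for one occurrence of \<open>A\<close> in \<open>M\<close>,
  at any depth: \<open>\<Pi>\<close> replaces the occurrence and \<open>\<xi>\<close> joins the enclosing stoup.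
  \<open>repl_tree\<close> returns the replacing sequence together with its contribution to that stoup.\<close>

inductive repl_meta :: "fm \<Rightarrow> meta \<Rightarrow> meta \<Rightarrow> meta \<Rightarrow> bool"
  and repl_tree :: "fm \<Rightarrow> meta \<Rightarrow> tree \<Rightarrow> meta \<Rightarrow> bool"
  for A :: fm and N :: meta where
  repl_here: "repl_tree A N (TF A) N"
| repl_Br: "repl_meta A N M M' \<Longrightarrow> repl_tree A N (Br M) (Meta {#} [Br M'])"
| repl_Meta: "repl_tree A N t (Meta e T) \<Longrightarrow>
    repl_meta A N (Meta z (S1 @ [t] @ S2)) (Meta (e + z) (S1 @ T @ S2))"

definition repl_seq :: "fm \<Rightarrow> meta \<Rightarrow> tree list \<Rightarrow> fm multiset \<Rightarrow> tree list \<Rightarrow> bool" where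
  "repl_seq A N S e S' \<longleftrightarrow>
    (\<exists>S1 t S2 T. S = S1 @ [t] @ S2 \<and> repl_tree A N t (Meta e T) \<and> S' = S1 @ T @ S2)"

lemma repl_meta_Meta:
  "repl_meta A N (Meta z S) M' \<longleftrightarrow> (\<exists>e S'. repl_seq A N S e S' \<and> M' = Meta (e + z) S')"
  unfolding repl_seq_def by (blast elim: repl_meta.cases intro: repl_Meta)

lemma repl_tree_TF: "repl_tree A N (TF F) R \<longleftrightarrow> F = A \<and> R = N"
  by (auto elim: repl_tree.cases intro: repl_here)

lemma repl_tree_Br: "repl_tree A N (Br M) R \<longleftrightarrow> (\<exists>M'. R = Meta {#} [Br M'] \<and> repl_meta A N M M')"
  by (auto elim: repl_tree.cases intro: repl_Br)

lemma repl_seq_Nil: "\<not> repl_seq A N [] e S'"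
  unfolding repl_seq_def by simp

lemma repl_seq_single: "repl_seq A N [t] e S' \<longleftrightarrow> repl_tree A N t (Meta e S')"
  unfolding repl_seq_def by (auto simp: Cons_eq_append_conv)

lemma repl_seq_single_TF: "repl_seq A N [TF F] e S' \<longleftrightarrow> F = A \<and> N = Meta e S'"
  by (auto simp: repl_seq_single repl_tree_TF)

lemma repl_seq_append_left: "repl_seq A N S e S' \<Longrightarrow> repl_seq A N (S @ R) e (S' @ R)"
  unfolding repl_seq_def by force

lemma repl_seq_append_right: "repl_seq A N S e S' \<Longrightarrow> repl_seq A N (R @ S) e (R @ S')"
  unfolding repl_seq_def by (metis append.assoc)

lemma repl_seq_append_cases:
  assumes "repl_seq A N (S @ R) e L"
  obtains (left) S' where "repl_seq A N S e S'" "L = S' @ R"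
    | (right) R' where "repl_seq A N R e R'" "L = S @ R'"
proof -
  from assms obtain S1 t S2 T where
    split: "S1 @ [t] @ S2 = S @ R" and t: "repl_tree A N t (Meta e T)" and L: "L = S1 @ T @ S2"
    unfolding repl_seq_def by metis
  from split consider (left) U where "S = S1 @ t # U" "S2 = U @ R"
    | (right) U where "R = U @ t # S2" "S1 = S @ U"
    by (auto simp: append_eq_append_conv2 Cons_eq_append_conv)
  then show thesis
  proof cases
    case (left U)
    then show thesis using that(1)[of "S1 @ T @ U"] t L unfolding repl_seq_def by force
  next
    case (right U)
    then show thesis using that(2)[of "U @ T @ S2"] t L unfolding repl_seq_def by force
  qed
qed

lemma repl_seq_append3_cases:
  assumes "repl_seq A N (S @ R @ T) e L"
  obtains (left) S' where "repl_seq A N S e S'" "L = S' @ R @ T"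
    | (middle) R' where "repl_seq A N R e R'" "L = S @ R' @ T"
    | (right) T' where "repl_seq A N T e T'" "L = S @ R @ T'"
  using assms by (elim repl_seq_append_cases) auto

lemma repl_meta_fill: "repl_seq A N S e S' \<Longrightarrow> repl_meta A N (fill X (Meta w S)) (fill X (Meta (e + w) S'))"
proof (induction X)
  case Hole
  then show ?case by (simp add: repl_meta_Meta)
next
  case (In z G1 X G2)
  then show ?case using repl_Meta[OF repl_Br, of A N _ _ z G1 G2] by simp
qed

lemma repl_meta_imp_fill:
  "repl_meta A (Meta \<xi> \<Pi>) M M' \<Longrightarrow>
    \<exists>X z G1 G2. M = fill X (Meta z (G1 @ [TF A] @ G2)) \<and> M' = fill X (Meta (\<xi> + z) (G1 @ \<Pi> @ G2))"
  "repl_tree A (Meta \<xi> \<Pi>) t R \<Longrightarrow> (t = TF A \<and> R = Meta \<xi> \<Pi>) \<or>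
    (\<exists>X z G1 G2. t = Br (fill X (Meta z (G1 @ [TF A] @ G2))) \<and>
      R = Meta {#} [Br (fill X (Meta (\<xi> + z) (G1 @ \<Pi> @ G2)))])"
proof (induction rule: repl_meta_repl_tree.inducts)
  case (repl_Meta t e T z S1 S2)
  from repl_Meta.IH show ?case
  proof (elim disjE exE conjE)
    assume "t = TF A" "Meta e T = Meta \<xi> \<Pi>"
    then show ?thesis by (intro exI[of _ Hole]) auto
  next
    fix X z' G1 G2
    assume "t = Br (fill X (Meta z' (G1 @ [TF A] @ G2)))"
      "Meta e T = Meta {#} [Br (fill X (Meta (\<xi> + z') (G1 @ \<Pi> @ G2)))]"
    then show ?thesis by (intro exI[of _ "In z S1 X S2"]) auto
  qed
qed blast+

lemma repl_meta_iff_fill: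
  "repl_meta A (Meta \<xi> \<Pi>) M M' \<longleftrightarrow>
    (\<exists>X z G1 G2. M = fill X (Meta z (G1 @ [TF A] @ G2)) \<and> M' = fill X (Meta (\<xi> + z) (G1 @ \<Pi> @ G2)))"
proof
  assume "\<exists>X z G1 G2. M = fill X (Meta z (G1 @ [TF A] @ G2)) \<and> M' = fill X (Meta (\<xi> + z) (G1 @ \<Pi> @ G2))"
  moreover have "repl_seq A (Meta \<xi> \<Pi>) (G1 @ [TF A] @ G2) \<xi> (G1 @ \<Pi> @ G2)" for G1 G2
    unfolding repl_seq_def using repl_here by blast
  ultimately show "repl_meta A (Meta \<xi> \<Pi>) M M'"
    using repl_meta_fill by blast
qed (rule repl_meta_imp_fill)

lemma repl_meta_Meta_cases:
  assumes "repl_meta A N (Meta w (D1 @ S @ D2)) M'"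
  obtains (outside) e D1' D2' where "M' = Meta (e + w) (D1' @ S @ D2')"
      "\<And>S0 w0. repl_meta A N (Meta w0 (D1 @ S0 @ D2)) (Meta (e + w0) (D1' @ S0 @ D2'))"
  | (inside) e S' where "repl_seq A N S e S'" "M' = Meta (e + w) (D1 @ S' @ D2)"
proof -
  from assms obtain e L where L: "repl_seq A N (D1 @ S @ D2) e L" "M' = Meta (e + w) L"
    by (auto simp: repl_meta_Meta)
  from L(1) show thesis
  proof (cases rule: repl_seq_append3_cases)
    case (left D1')
    have "repl_seq A N (D1 @ S0 @ D2) e (D1' @ S0 @ D2)" for S0
      using repl_seq_append_left[OF left(1), of "S0 @ D2"] by simp
    then show thesis using outside[of e D1' D2] left(2) L(2) by (simp add: repl_meta_Meta)
  next
    case (middle S')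
    then show thesis using inside L(2) by simp
  next
    case (right D2')
    have "repl_seq A N (D1 @ S0 @ D2) e (D1 @ S0 @ D2')" for S0
      using repl_seq_append_right[OF right(1), of "D1 @ S0"] by simp
    then show thesis using outside[of e D1 D2'] right(2) L(2) by (simp add: repl_meta_Meta)
  qed
qed

lemma repl_meta_fill_cases:
  assumes "repl_meta A N (fill X (Meta w (D1 @ S @ D2))) M'"
  obtains (outside) Y e D1' D2' where "M' = fill Y (Meta (e + w) (D1' @ S @ D2'))"
      "\<And>S0 w0. repl_meta A N (fill X (Meta w0 (D1 @ S0 @ D2))) (fill Y (Meta (e + w0) (D1' @ S0 @ D2')))"
  | (inside) e S' where "repl_seq A N S e S'" "M' = fill X (Meta (e + w) (D1 @ S' @ D2))"
  using assms
proof (induction X arbitrary: M' thesis)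
  case Hole
  from Hole.prems(3) have "repl_meta A N (Meta w (D1 @ S @ D2)) M'" by simp
  then show ?case
    by (cases rule: repl_meta_Meta_cases) (use Hole.prems(1)[of Hole] Hole.prems(2) in auto)
next
  case (In u E1 X E2)
  let ?F = "\<lambda>w0 S0. fill X (Meta w0 (D1 @ S0 @ D2))"
  from In.prems(3) have "repl_meta A N (Meta u (E1 @ [Br (?F w S)] @ E2)) M'" by simp
  then show ?case
  proof (cases rule: repl_meta_Meta_cases)
    case (outside e E1' E2')
    show ?thesis
    proof (rule In.prems(1)[of "In (e + u) E1' X E2'" "{#}" D1 D2])
      show "M' = fill (In (e + u) E1' X E2') (Meta ({#} + w) (D1 @ S @ D2))"
        using outside(1) by simp
      show "repl_meta A N (fill (In u E1 X E2) (Meta w0 (D1 @ S0 @ D2)))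
          (fill (In (e + u) E1' X E2') (Meta ({#} + w0) (D1 @ S0 @ D2)))" for S0 w0
        using outside(2)[of u "[Br (?F w0 S0)]"] by simp
    qed
  next
    case (inside e R)
    then obtain F' where F': "e = {#}" "R = [Br F']" "repl_meta A N (?F w S) F'"
      by (auto simp: repl_seq_single repl_tree_Br)
    show ?thesis
    proof (rule In.IH)
      fix Y e' D1' D2'
      assume outside: "F' = fill Y (Meta (e' + w) (D1' @ S @ D2'))"
        "\<And>S0 w0. repl_meta A N (?F w0 S0) (fill Y (Meta (e' + w0) (D1' @ S0 @ D2')))"
      show thesis
      proof (rule In.prems(1)[of "In u E1 Y E2" e' D1' D2'])
        show "M' = fill (In u E1 Y E2) (Meta (e' + w) (D1' @ S @ D2'))"
          using outside(1) F' inside(2) by simp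
        show "repl_meta A N (fill (In u E1 X E2) (Meta w0 (D1 @ S0 @ D2)))
            (fill (In u E1 Y E2) (Meta (e' + w0) (D1' @ S0 @ D2')))" for S0 w0
          using repl_Meta[OF repl_Br[OF outside(2)[of w0 S0]], of u E1 E2] by simp
      qed
    next
      fix e' S'
      assume "repl_seq A N S e' S'" "F' = fill X (Meta (e' + w) (D1 @ S' @ D2))"
      then show thesis using In.prems(2)[of e' S'] F' inside(2) by simp
    qed (rule F'(3))
  qed
qed

lemma fill_Meta_splice:
  obtains Y e D1' D2' where
    "\<And>w L \<xi> \<Pi>. Meta \<xi> \<Pi> = fill X (Meta w L) \<Longrightarrow>
      fill Xc (Meta (\<xi> + zc) (Gc1 @ \<Pi> @ Gc2)) = fill Y (Meta (e + w) (D1' @ L @ D2'))"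
proof (cases X)
  case Hole
  then show thesis using that[of Xc zc Gc1 Gc2] by (auto simp: add.commute)
next
  case (In u E1 X0 E2)
  then show thesis
    using that[of "ctx_comp Xc (In (u + zc) (Gc1 @ E1) X0 (E2 @ Gc2))" "{#}" "[]" "[]"]
    by (auto simp: fill_ctx_comp)
qed

lemma repl_meta_by_fill:
  assumes "repl_meta A (fill X (Meta w (D1 @ S @ D2))) M M'"
  obtains (plug) Y e D1' D2' where "M' = fill Y (Meta (e + w) (D1' @ S @ D2'))"
    "\<And>S0 w0. repl_meta A (fill X (Meta w0 (D1 @ S0 @ D2))) M (fill Y (Meta (e + w0) (D1' @ S0 @ D2')))"
proof -
  obtain \<xi> \<Pi> where N: "fill X (Meta w (D1 @ S @ D2)) = Meta \<xi> \<Pi>"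
    by (cases "fill X (Meta w (D1 @ S @ D2))")
  with assms obtain Xc zc Gc1 Gc2 where
    M: "M = fill Xc (Meta zc (Gc1 @ [TF A] @ Gc2))" and M': "M' = fill Xc (Meta (\<xi> + zc) (Gc1 @ \<Pi> @ Gc2))"
    by (auto simp: repl_meta_iff_fill)
  obtain Y e D1' D2' where splice: "\<And>w L \<xi> \<Pi>. Meta \<xi> \<Pi> = fill X (Meta w L) \<Longrightarrow>
      fill Xc (Meta (\<xi> + zc) (Gc1 @ \<Pi> @ Gc2)) = fill Y (Meta (e + w) (D1' @ L @ D2'))"
    using fill_Meta_splice[of X Xc zc Gc1 Gc2] by blast
  show thesis
  proof (rule that[of Y e "D1' @ D1" "D2 @ D2'"])
    show "M' = fill Y (Meta (e + w) ((D1' @ D1) @ S @ D2 @ D2'))"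
      using splice[OF N[symmetric]] M' by simp
    show "repl_meta A (fill X (Meta w0 (D1 @ S0 @ D2))) M (fill Y (Meta (e + w0) ((D1' @ D1) @ S0 @ D2 @ D2')))"
      for S0 w0
    proof -
      obtain \<xi>0 \<Pi>0 where N0: "fill X (Meta w0 (D1 @ S0 @ D2)) = Meta \<xi>0 \<Pi>0"
        by (cases "fill X (Meta w0 (D1 @ S0 @ D2))")
      show ?thesis
        unfolding N0 repl_meta_iff_fill using M splice[OF N0[symmetric]]
        by (intro exI[of _ Xc] exI[of _ zc] exI[of _ Gc1] exI[of _ Gc2]) simp
    qed
  qed
qed

definition cut_from :: "meta \<Rightarrow> fm \<Rightarrow> bool" where
  "cut_from N A \<longleftrightarrow> (\<forall>M M' C. deriv M C \<longrightarrow> repl_meta A N M M' \<longrightarrow> deriv M' C)"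

lemma cut_fromD:
  assumes "cut_from (Meta \<xi> \<Pi>) A" "deriv (fill X (Meta z (G1 @ [TF A] @ G2))) C"
  shows "deriv (fill X (Meta (\<xi> + z) (G1 @ \<Pi> @ G2))) C"
  using assms repl_meta_iff_fill[of A \<xi> \<Pi>] unfolding cut_from_def by blast

section \<open>Substitution in stoups\<close>

definition stoup_subst :: "fm \<Rightarrow> fm multiset \<Rightarrow> fm multiset \<Rightarrow> fm multiset \<Rightarrow> bool" where
  "stoup_subst B \<xi> z z' \<longleftrightarrow> (\<exists>k r. z = r + replicate_mset k B \<and> z' = r + repeat_mset k \<xi>)"

lemma replicate_mset_add: "replicate_mset (m + n) x = replicate_mset m x + replicate_mset n x"
  by (induction m) auto

lemma stoup_subst_refl: "stoup_subst B \<xi> z z"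
  unfolding stoup_subst_def by (rule exI[of _ 0]) auto

lemma stoup_subst_here: "stoup_subst B \<xi> {#B#} \<xi>"
  unfolding stoup_subst_def by (rule exI[of _ 1]) auto

lemma stoup_subst_add:
  assumes "stoup_subst B \<xi> a a'" "stoup_subst B \<xi> b b'"
  shows "stoup_subst B \<xi> (a + b) (a' + b')"
proof -
  from assms obtain k r l s where
    "a = r + replicate_mset k B" "a' = r + repeat_mset k \<xi>"
    "b = s + replicate_mset l B" "b' = s + repeat_mset l \<xi>"
    unfolding stoup_subst_def by blast
  then show ?thesis
    unfolding stoup_subst_def
    by (intro exI[of _ "k + l"] exI[of _ "r + s"]) (simp add: replicate_mset_add repeat_mset_distrib ac_simps)
qed

lemma stoup_subst_split:
  assumes "stoup_subst B \<xi> (a + b) w"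
  obtains a' b' where "w = a' + b'" "stoup_subst B \<xi> a a'" "stoup_subst B \<xi> b b'"
proof -
  from assms obtain k r where h: "a + b = r + replicate_mset k B" "w = r + repeat_mset k \<xi>"
    unfolding stoup_subst_def by blast
  define ka where "ka = min (count a B) k"
  define kb where "kb = k - ka"
  have "count a B + count b B = count r B + k"
    using arg_cong[OF h(1), of "\<lambda>m. count m B"] by simp
  then have "kb \<le> count b B" "ka \<le> count a B" "k = ka + kb"
    unfolding kb_def ka_def by auto
  then have a: "a = (a - replicate_mset ka B) + replicate_mset ka B"
    and b: "b = (b - replicate_mset kb B) + replicate_mset kb B"
    and k: "replicate_mset k B = replicate_mset ka B + replicate_mset kb B"
    by (simp_all add: count_le_replicate_mset_subset_eq replicate_mset_add)
  define a0 where "a0 = a - replicate_mset ka B"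
  define b0 where "b0 = b - replicate_mset kb B"
  have "a0 + b0 + replicate_mset k B = r + replicate_mset k B"
    using h(1) a b k unfolding a0_def b0_def by (simp add: ac_simps)
  then have "w = (a0 + repeat_mset ka \<xi>) + (b0 + repeat_mset kb \<xi>)"
    using h(2) \<open>k = ka + kb\<close> by (simp add: repeat_mset_distrib ac_simps)
  moreover have "stoup_subst B \<xi> a (a0 + repeat_mset ka \<xi>)" "stoup_subst B \<xi> b (b0 + repeat_mset kb \<xi>)"
    unfolding stoup_subst_def a0_def b0_def using a b by blast+
  ultimately show thesis by (rule that)
qed

lemma stoup_subst_empty: "stoup_subst B \<xi> {#} w \<longleftrightarrow> w = {#}"
  unfolding stoup_subst_def by auto

lemma stoup_subst_nonempty: "\<xi> \<noteq> {#} \<Longrightarrow> stoup_subst B \<xi> z z' \<Longrightarrow> z \<noteq> {#} \<Longrightarrow> z' \<noteq> {#}"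
  unfolding stoup_subst_def by (auto simp: repeat_mset_eq_empty_iff)

lemma stoup_subst_add_mset_cases:
  assumes "stoup_subst B \<xi> (z + {#F#}) w"
  obtains (kept) w0 where "w = w0 + {#F#}" "stoup_subst B \<xi> z w0"
    | (replaced) w0 where "F = B" "w = w0 + \<xi>" "stoup_subst B \<xi> z w0"
proof -
  from assms obtain w0 u where w: "w = w0 + u" "stoup_subst B \<xi> z w0" "stoup_subst B \<xi> {#F#} u"
    by (rule stoup_subst_split)
  from w(3) obtain k r where u: "{#F#} = r + replicate_mset k B" "u = r + repeat_mset k \<xi>"
    unfolding stoup_subst_def by blast
  moreover have "size r + k = 1"
    using arg_cong[OF u(1), of size] by simp
  ultimately have "u = {#F#} \<or> (F = B \<and> u = \<xi>)"
    by (cases k) (auto simp: size_1_singleton_mset)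
  then show thesis using that w by blast
qed

inductive stoups_subst :: "fm \<Rightarrow> fm multiset \<Rightarrow> meta \<Rightarrow> meta \<Rightarrow> bool"
  and stoups_subst_tree :: "fm \<Rightarrow> fm multiset \<Rightarrow> tree \<Rightarrow> tree \<Rightarrow> bool"
  for B :: fm and \<xi> :: "fm multiset" where
  stoups_subst_Meta: "stoup_subst B \<xi> z z' \<Longrightarrow> list_all2 (stoups_subst_tree B \<xi>) G G' \<Longrightarrow>
    stoups_subst B \<xi> (Meta z G) (Meta z' G')"
| stoups_subst_TF: "stoups_subst_tree B \<xi> (TF F) (TF F)"
| stoups_subst_Br: "stoups_subst B \<xi> M M' \<Longrightarrow> stoups_subst_tree B \<xi> (Br M) (Br M')"
monos list_all2_mono

fun stoups_subst_ctx :: "fm \<Rightarrow> fm multiset \<Rightarrow> ctx \<Rightarrow> ctx \<Rightarrow> bool" where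
  "stoups_subst_ctx B \<xi> Hole Hole \<longleftrightarrow> True"
| "stoups_subst_ctx B \<xi> (In z G1 X G2) (In z' G1' X' G2') \<longleftrightarrow>
    stoup_subst B \<xi> z z' \<and> list_all2 (stoups_subst_tree B \<xi>) G1 G1' \<and>
    stoups_subst_ctx B \<xi> X X' \<and> list_all2 (stoups_subst_tree B \<xi>) G2 G2'"
| "stoups_subst_ctx B \<xi> _ _ \<longleftrightarrow> False"

lemma stoups_subst_Meta_iff:
  "stoups_subst B \<xi> (Meta z G) N \<longleftrightarrow>
    (\<exists>z' G'. N = Meta z' G' \<and> stoup_subst B \<xi> z z' \<and> list_all2 (stoups_subst_tree B \<xi>) G G')"
  by (auto elim: stoups_subst.cases intro: stoups_subst_Meta)

lemma stoups_subst_tree_TF_iff: "stoups_subst_tree B \<xi> (TF F) t \<longleftrightarrow> t = TF F"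
  by (auto elim: stoups_subst_tree.cases intro: stoups_subst_TF)

lemma stoups_subst_tree_Br_iff:
  "stoups_subst_tree B \<xi> (Br M) t \<longleftrightarrow> (\<exists>M'. t = Br M' \<and> stoups_subst B \<xi> M M')"
  by (auto elim: stoups_subst_tree.cases intro: stoups_subst_Br)

lemma list_all2_stoups_subst_TF [simp]: "list_all2 (stoups_subst_tree B \<xi>) [TF F] L \<longleftrightarrow> L = [TF F]"
  by (auto simp: list_all2_Cons1 stoups_subst_tree_TF_iff)

lemma stoups_subst_refl: "stoups_subst B \<xi> M M" "stoups_subst_tree B \<xi> t t"
proof (induction M and t)
  case (Meta z G)
  then show ?case by (auto intro!: stoups_subst_Meta stoup_subst_refl simp: list_all2_same)
qed (auto intro: stoups_subst_TF stoups_subst_Br)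

lemma list_all2_stoups_subst_refl: "list_all2 (stoups_subst_tree B \<xi>) G G"
  by (simp add: list_all2_same stoups_subst_refl)

lemma stoups_subst_ctx_refl: "stoups_subst_ctx B \<xi> X X"
  by (induction X) (auto simp: stoup_subst_refl list_all2_stoups_subst_refl)

lemma stoups_subst_fill:
  "stoups_subst_ctx B \<xi> X X' \<Longrightarrow> stoups_subst B \<xi> M M' \<Longrightarrow> stoups_subst B \<xi> (fill X M) (fill X' M')"
proof (induction X arbitrary: X')
  case Hole
  then show ?case by (cases X') auto
next
  case (In z G1 X G2)
  then show ?case by (cases X') (auto intro!: stoups_subst_Meta stoups_subst_Br list_all2_appendI)
qed

lemma stoups_subst_fill_inv:
  "stoups_subst B \<xi> (fill X M) N \<Longrightarrow> \<exists>X' M'. N = fill X' M' \<and> stoups_subst_ctx B \<xi> X X' \<and> stoups_subst B \<xi> M M'"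
proof (induction X arbitrary: N)
  case Hole
  then show ?case by (intro exI[of _ Hole]) auto
next
  case (In z G1 X G2)
  then obtain z' G1' F' G2' where N: "N = Meta z' (G1' @ [Br F'] @ G2')" "stoup_subst B \<xi> z z'"
    "list_all2 (stoups_subst_tree B \<xi>) G1 G1'" "stoups_subst B \<xi> (fill X M) F'"
    "list_all2 (stoups_subst_tree B \<xi>) G2 G2'"
    by (auto simp: stoups_subst_Meta_iff list_all2_append1 list_all2_Cons1 stoups_subst_tree_Br_iff)
  with In.IH[OF N(4)] show ?case
    by (metis fill.simps(2) stoups_subst_ctx.simps(2))
qed

lemma stoups_subst_fill_cases:
  assumes "stoups_subst B \<xi> (fill X (Meta w (D1 @ S @ D2))) M'"
  obtains (decomp) Y w' D1' S' D2' where "M' = fill Y (Meta w' (D1' @ S' @ D2'))" "stoup_subst B \<xi> w w'"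
    "list_all2 (stoups_subst_tree B \<xi>) S S'"
    "\<And>w0 w0' S0 S0'. stoup_subst B \<xi> w0 w0' \<Longrightarrow> list_all2 (stoups_subst_tree B \<xi>) S0 S0' \<Longrightarrow>
      stoups_subst B \<xi> (fill X (Meta w0 (D1 @ S0 @ D2))) (fill Y (Meta w0' (D1' @ S0' @ D2')))"
proof -
  from stoups_subst_fill_inv[OF assms] obtain Y w' D1' S' D2' where
    "M' = fill Y (Meta w' (D1' @ S' @ D2'))" "stoups_subst_ctx B \<xi> X Y" "stoup_subst B \<xi> w w'"
    "list_all2 (stoups_subst_tree B \<xi>) D1 D1'" "list_all2 (stoups_subst_tree B \<xi>) S S'"
    "list_all2 (stoups_subst_tree B \<xi>) D2 D2'"
    by (auto simp: stoups_subst_Meta_iff list_all2_append1)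
  then show thesis
    by (intro that[of Y w' D1' S' D2']) (auto intro!: stoups_subst_fill stoups_subst_Meta list_all2_appendI)
qed

text \<open>\<open>T\<close> and \<open>U\<close> are what the premises of a left rule
  have in place of the part \<open>S\<close> of its conclusion (\<open>T = U\<close> for one-premise rules).\<close>

lemma deriv_stoups_subst_context_rule:
  assumes "stoups_subst B \<xi> (fill X (Meta w (D1 @ S @ D2))) M'"
    and rigid: "\<And>L. list_all2 (stoups_subst_tree B \<xi>) S L \<Longrightarrow> L = S"
    and IH1: "\<And>M'. stoups_subst B \<xi> (fill X (Meta w (D1 @ T @ D2))) M' \<Longrightarrow> deriv M' C"
    and IH2: "\<And>M'. stoups_subst B \<xi> (fill X (Meta w (D1 @ U @ D2))) M' \<Longrightarrow> deriv M' C"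
    and rule: "\<And>Y w' D1' D2'. deriv (fill Y (Meta w' (D1' @ T @ D2'))) C \<Longrightarrow>
      deriv (fill Y (Meta w' (D1' @ U @ D2'))) C \<Longrightarrow> deriv (fill Y (Meta w' (D1' @ S @ D2'))) C"
  shows "deriv M' C"
  using assms(1)
proof (cases rule: stoups_subst_fill_cases)
  case (decomp Y w' D1' L D2')
  have "deriv (fill Y (Meta w' (D1' @ T @ D2'))) C" "deriv (fill Y (Meta w' (D1' @ U @ D2'))) C"
    using IH1 IH2 decomp(4)[OF decomp(2) list_all2_stoups_subst_refl] by blast+
  then have "deriv (fill Y (Meta w' (D1' @ S @ D2'))) C"
    by (rule rule)
  then show ?thesis using decomp(1) rigid[OF decomp(3)] by simp
qed

lemma deriv_stoups_subst:
  assumes cut: "cut_from (Meta \<xi> []) B" and nonempty: "\<xi> \<noteq> {#}"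
  shows "deriv M C \<Longrightarrow> stoups_subst B \<xi> M M' \<Longrightarrow> deriv M' C"
proof (induction arbitrary: M' rule: deriv.induct)
  case (ax A)
  then show ?case by (auto simp: stoups_subst_Meta_iff stoup_subst_empty intro: deriv.ax)
next
  case oneR
  then show ?case by (auto simp: stoups_subst_Meta_iff stoup_subst_empty intro: deriv.oneR)
next
  case (rdivL z1 G B' X z2 D1 C' D2 D)
  from rdivL.prems have "stoups_subst B \<xi> (fill X (Meta (z1 + z2) (D1 @ ([TF (RDiv C' B')] @ G) @ D2))) M'"
    by simp
  then show ?case
  proof (cases rule: stoups_subst_fill_cases)
    case (decomp Y w' D1' S' D2')
    from decomp(3) obtain G' where G': "S' = TF (RDiv C' B') # G'" "list_all2 (stoups_subst_tree B \<xi>) G G'"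
      by (auto simp: list_all2_Cons1 stoups_subst_tree_TF_iff)
    from decomp(2) obtain z1' z2' where z: "w' = z1' + z2'" "stoup_subst B \<xi> z1 z1'" "stoup_subst B \<xi> z2 z2'"
      by (rule stoup_subst_split)
    have "deriv (Meta z1' G') B'"
      using rdivL.IH(1) stoups_subst_Meta[OF z(2) G'(2)] by blast
    moreover have "deriv (fill Y (Meta z2' (D1' @ [TF C'] @ D2'))) D"
      using rdivL.IH(2) decomp(4)[OF z(3) list_all2_stoups_subst_refl] by blast
    ultimately have "deriv (fill Y (Meta (z1' + z2') (D1' @ [TF (RDiv C' B')] @ G' @ D2'))) D"
      by (rule deriv.rdivL)
    then show ?thesis using decomp(1) G'(1) z(1) by simp
  qed
next
  case (rdivR z G B' C')
  from rdivR.prems obtain z' G' where M': "M' = Meta z' G'" "stoup_subst B \<xi> z z'"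
    "list_all2 (stoups_subst_tree B \<xi>) G G'"
    by (auto simp: stoups_subst_Meta_iff)
  then have "stoups_subst B \<xi> (Meta z (G @ [TF B'])) (Meta z' (G' @ [TF B']))"
    by (intro stoups_subst_Meta list_all2_appendI) (simp_all add: stoups_subst_TF)
  then show ?case using rdivR.IH M'(1) deriv.rdivR by blast
next
  case (ldivL z1 G A' X z2 D1 C' D2 D)
  from ldivL.prems have "stoups_subst B \<xi> (fill X (Meta (z1 + z2) (D1 @ (G @ [TF (LDiv A' C')]) @ D2))) M'"
    by simp
  then show ?case
  proof (cases rule: stoups_subst_fill_cases)
    case (decomp Y w' D1' S' D2')
    from decomp(3) obtain G' where G': "S' = G' @ [TF (LDiv A' C')]" "list_all2 (stoups_subst_tree B \<xi>) G G'"
      by (auto simp: list_all2_append1)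
    from decomp(2) obtain z1' z2' where z: "w' = z1' + z2'" "stoup_subst B \<xi> z1 z1'" "stoup_subst B \<xi> z2 z2'"
      by (rule stoup_subst_split)
    have "deriv (Meta z1' G') A'"
      using ldivL.IH(1) stoups_subst_Meta[OF z(2) G'(2)] by blast
    moreover have "deriv (fill Y (Meta z2' (D1' @ [TF C'] @ D2'))) D"
      using ldivL.IH(2) decomp(4)[OF z(3) list_all2_stoups_subst_refl] by blast
    ultimately have "deriv (fill Y (Meta (z1' + z2') (D1' @ G' @ [TF (LDiv A' C')] @ D2'))) D"
      by (rule deriv.ldivL)
    then show ?thesis using decomp(1) G'(1) z(1) by simp
  qed
next
  case (ldivR z A' G C')
  from ldivR.prems obtain z' G' where M': "M' = Meta z' G'" "stoup_subst B \<xi> z z'"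
    "list_all2 (stoups_subst_tree B \<xi>) G G'"
    by (auto simp: stoups_subst_Meta_iff)
  then have "stoups_subst B \<xi> (Meta z (TF A' # G)) (Meta z' (TF A' # G'))"
    by (simp add: stoups_subst_Meta stoups_subst_TF)
  then show ?case using ldivR.IH M'(1) deriv.ldivR by blast
next
  case (prodL X z D1 A' B' D2 D)
  show ?case
    by (rule deriv_stoups_subst_context_rule[OF prodL.prems,
          where T = "[TF A', TF B']" and U = "[TF A', TF B']"])
      (use prodL.IH deriv.prodL in \<open>auto\<close>)
next
  case (prodR z1 D A' z2 G B')
  from prodR.prems obtain w' D' G' where M': "M' = Meta w' (D' @ G')" "stoup_subst B \<xi> (z1 + z2) w'"
    "list_all2 (stoups_subst_tree B \<xi>) D D'" "list_all2 (stoups_subst_tree B \<xi>) G G'"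
    by (auto simp: stoups_subst_Meta_iff list_all2_append1)
  from M'(2) obtain z1' z2' where z: "w' = z1' + z2'" "stoup_subst B \<xi> z1 z1'" "stoup_subst B \<xi> z2 z2'"
    by (rule stoup_subst_split)
  have "deriv (Meta z1' D') A'" "deriv (Meta z2' G') B'"
    using prodR.IH stoups_subst_Meta z(2,3) M'(3,4) by blast+
  then show ?case using deriv.prodR M'(1) z(1) by simp
next
  case (oneL X z D1 D2 A')
  show ?case
    by (rule deriv_stoups_subst_context_rule[OF oneL.prems, where T = "[]" and U = "[]"])
      (use oneL.IH deriv.oneL in \<open>auto\<close>)
next
  case (disjL X z D1 A1 D2 C' A2)
  show ?case
    by (rule deriv_stoups_subst_context_rule[OF disjL.prems, where T = "[TF A1]" and U = "[TF A2]"])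
      (use disjL.IH deriv.disjL in \<open>auto\<close>)
next
  case (disjR1 M A1 A2)
  then show ?case by (blast intro: deriv.disjR1)
next
  case (disjR2 M A2 A1)
  then show ?case by (blast intro: deriv.disjR2)
next
  case (conjL1 X z D1 A1 D2 C' A2)
  show ?case
    by (rule deriv_stoups_subst_context_rule[OF conjL1.prems, where T = "[TF A1]" and U = "[TF A1]"])
      (use conjL1.IH deriv.conjL1 in \<open>auto\<close>)
next
  case (conjL2 X z D1 A2 D2 C' A1)
  show ?case
    by (rule deriv_stoups_subst_context_rule[OF conjL2.prems, where T = "[TF A2]" and U = "[TF A2]"])
      (use conjL2.IH deriv.conjL2 in \<open>auto\<close>)
next
  case (conjR M A1 A2)
  then show ?case by (blast intro: deriv.conjR)
next
  case (boxinvL X z D1 A' D2 B')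
  show ?case
    by (rule deriv_stoups_subst_context_rule[OF boxinvL.prems, where T = "[TF A']" and U = "[TF A']"])
      (use boxinvL.IH deriv.boxinvL in \<open>auto simp: list_all2_Cons1 stoups_subst_tree_Br_iff
            stoups_subst_tree_TF_iff stoups_subst_Meta_iff stoup_subst_empty\<close>)
next
  case (boxinvR M A')
  then show ?case by (blast intro: deriv.boxinvR stoups_subst_Meta stoups_subst_Br stoup_subst_refl)
next
  case (diamL X z D1 A' D2 B')
  show ?case
    by (rule deriv_stoups_subst_context_rule[OF diamL.prems,
          where T = "[Br (Meta {#} [TF A'])]" and U = "[Br (Meta {#} [TF A'])]"])
      (use diamL.IH deriv.diamL in \<open>auto\<close>)
next
  case (diamR M A')
  then show ?case
    by (auto simp: stoups_subst_Meta_iff stoup_subst_empty list_all2_Cons1 stoups_subst_tree_Br_iff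
        intro: deriv.diamR)
next
  case (bangL X z A' G1 G2 B')
  from bangL.prems show ?case
  proof (cases rule: stoups_subst_fill_cases)
    case (decomp Y w' D1' S' D2')
    have "stoups_subst B \<xi> (fill X (Meta (z + {#A'#}) (G1 @ [] @ G2))) (fill Y (Meta (w' + {#A'#}) (D1' @ [] @ D2')))"
      by (rule decomp(4)[OF stoup_subst_add[OF decomp(2) stoup_subst_refl] list_all2_stoups_subst_refl])
    then have "deriv (fill Y (Meta (w' + {#A'#}) (D1' @ D2'))) B'"
      using bangL.IH by simp
    then show ?thesis using deriv.bangL decomp(1,3) by simp
  qed
next
  case (bangP X z G1 A' G2 B')
  from bangP.prems have "stoups_subst B \<xi> (fill X (Meta (z + {#A'#}) (G1 @ [] @ G2))) M'" by simp
  then show ?case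
  proof (cases rule: stoups_subst_fill_cases)
    case (decomp Y w' D1' S' D2')
    from decomp(2) show ?thesis
    proof (cases rule: stoup_subst_add_mset_cases)
      case (kept w0)
      then have "deriv (fill Y (Meta w0 (D1' @ [TF A'] @ D2'))) B'"
        using bangP.IH decomp(4) list_all2_stoups_subst_refl by blast
      then show ?thesis using deriv.bangP decomp(1,3) kept(1) by fastforce
    next
      case (replaced w0)
      then have "deriv (fill Y (Meta w0 (D1' @ [TF B] @ D2'))) B'"
        using bangP.IH decomp(4) list_all2_stoups_subst_refl by blast
      then show ?thesis
        using cut_fromD[OF cut] decomp(1,3) replaced(2) by (fastforce simp: add.commute)
    qed
  qed
next
  case (bangR' z B')
  from bangR'.prems obtain z' where M': "M' = Meta z' []" "stoup_subst B \<xi> z z'"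
    by (auto simp: stoups_subst_Meta_iff)
  have "deriv (Meta z' []) B'"
    using bangR'.IH stoups_subst_Meta[OF M'(2)] by simp
  moreover have "z' \<noteq> {#}"
    using stoup_subst_nonempty[OF nonempty M'(2) bangR'.hyps(2)] .
  ultimately show ?case using M'(1) deriv.bangR' by simp
next
  case (bangC' X z1 z2 G1 z' G2 G3 C')
  from bangC'.prems show ?case
  proof (cases rule: stoups_subst_fill_cases)
    case (decomp Y w' D1' S' D2')
    from decomp(2) obtain a b' where w': "w' = a + b'" "stoup_subst B \<xi> (z1 + z2) a" "stoup_subst B \<xi> z' b'"
      by (rule stoup_subst_split)
    from w'(2) obtain z1' z2' where a: "a = z1' + z2'" "stoup_subst B \<xi> z1 z1'" "stoup_subst B \<xi> z2 z2'"
      by (rule stoup_subst_split)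
    have "list_all2 (stoups_subst_tree B \<xi>) [Br (Meta (z' + z2) G2)] [Br (Meta (b' + z2') S')]"
      using stoup_subst_add[OF w'(3) a(3)] decomp(3) by (simp add: stoups_subst_Br stoups_subst_Meta)
    then have "stoups_subst B \<xi> (fill X (Meta (z1 + z2) (G1 @ [Br (Meta (z' + z2) G2)] @ G3)))
        (fill Y (Meta (z1' + z2') (D1' @ [Br (Meta (b' + z2') S')] @ D2')))"
      by (rule decomp(4)[OF stoup_subst_add[OF a(2,3)]])
    then have "deriv (fill Y (Meta (z1' + z2') (D1' @ [Br (Meta (b' + z2') S')] @ D2'))) C'"
      by (rule bangC'.IH)
    from deriv.bangC'[OF this stoup_subst_nonempty[OF nonempty a(3) bangC'.hyps(2)]]
    show ?thesis using decomp(1) w'(1) a(1) by (simp add: ac_simps)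
  qed
qed

section \<open>Cut admissibility\<close>

definition cut_admissible :: "fm \<Rightarrow> bool" where
  "cut_admissible A \<longleftrightarrow> (\<forall>N. deriv N A \<longrightarrow> cut_from N A)"

lemma cut_admissibleD:
  assumes "cut_admissible A" "deriv (Meta \<xi> \<Pi>) A" "deriv (fill X (Meta z (G1 @ [TF A] @ G2))) C"
  shows "deriv (fill X (Meta (\<xi> + z) (G1 @ \<Pi> @ G2))) C"
  using assms cut_fromD unfolding cut_admissible_def by blast

inductive right_intro :: "meta \<Rightarrow> fm \<Rightarrow> bool" where
  right_intro_RDiv: "deriv (Meta \<xi> (\<Pi> @ [TF B])) C \<Longrightarrow> right_intro (Meta \<xi> \<Pi>) (RDiv C B)"
| right_intro_LDiv: "deriv (Meta \<xi> (TF A # \<Pi>)) C \<Longrightarrow> right_intro (Meta \<xi> \<Pi>) (LDiv A C)"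
| right_intro_Prod: "deriv (Meta \<xi>1 \<Pi>1) A \<Longrightarrow> deriv (Meta \<xi>2 \<Pi>2) B \<Longrightarrow>
    right_intro (Meta (\<xi>1 + \<xi>2) (\<Pi>1 @ \<Pi>2)) (Prod A B)"
| right_intro_One: "right_intro (Meta {#} []) One"
| right_intro_Disj1: "deriv N A \<Longrightarrow> right_intro N (Disj A B)"
| right_intro_Disj2: "deriv N B \<Longrightarrow> right_intro N (Disj A B)"
| right_intro_Conj: "deriv N A \<Longrightarrow> deriv N B \<Longrightarrow> right_intro N (Conj A B)"
| right_intro_BoxInv: "deriv (Meta {#} [Br N]) A \<Longrightarrow> right_intro N (BoxInv A)"
| right_intro_Diam: "deriv N A \<Longrightarrow> right_intro (Meta {#} [Br N]) (Diam A)"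
| right_intro_Bang: "deriv (Meta \<xi> []) A \<Longrightarrow> \<xi> \<noteq> {#} \<Longrightarrow> right_intro (Meta \<xi> []) (Bang A)"

lemma right_intro_deriv: "right_intro N F \<Longrightarrow> deriv N F"
  by (induction rule: right_intro.induct) (auto intro: deriv.intros)

inductive_cases right_intro_RDivE: "right_intro N (RDiv C B)"
  and right_intro_LDivE: "right_intro N (LDiv A C)"
  and right_intro_ProdE: "right_intro N (Prod A B)"
  and right_intro_OneE: "right_intro N One"
  and right_intro_DisjE: "right_intro N (Disj A B)"
  and right_intro_ConjE: "right_intro N (Conj A B)"
  and right_intro_BoxInvE: "right_intro N (BoxInv A)"
  and right_intro_DiamE: "right_intro N (Diam A)"
  and right_intro_BangE: "right_intro N (Bang A)"

lemma principal_cut_RDiv: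
  assumes "cut_admissible B" "cut_admissible C"
    and "deriv (Meta \<xi> (\<Pi> @ [TF B])) C" "deriv (Meta z1 G) B" "deriv (fill X (Meta z2 (D1 @ [TF C] @ D2))) D"
  shows "deriv (fill X (Meta (\<xi> + (z1 + z2)) (D1 @ (\<Pi> @ G) @ D2))) D"
proof -
  have "deriv (fill Hole (Meta (z1 + \<xi>) (\<Pi> @ G @ []))) C"
    using cut_admissibleD[OF assms(1,4), of Hole \<xi> \<Pi> "[]"] assms(3) by simp
  from cut_admissibleD[OF assms(2) this[simplified] assms(5)] show ?thesis
    by (simp add: ac_simps)
qed

lemma principal_cut_LDiv:
  assumes "cut_admissible A" "cut_admissible C"
    and "deriv (Meta \<xi> (TF A # \<Pi>)) C" "deriv (Meta z1 G) A" "deriv (fill X (Meta z2 (D1 @ [TF C] @ D2))) D"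
  shows "deriv (fill X (Meta (\<xi> + (z1 + z2)) (D1 @ (G @ \<Pi>) @ D2))) D"
proof -
  have "deriv (fill Hole (Meta (z1 + \<xi>) ([] @ G @ \<Pi>))) C"
    using cut_admissibleD[OF assms(1,4), of Hole \<xi> "[]" \<Pi>] assms(3) by simp
  from cut_admissibleD[OF assms(2) this[simplified] assms(5)] show ?thesis
    by (simp add: ac_simps)
qed

lemma principal_cut_Prod:
  assumes "cut_admissible A" "cut_admissible B"
    and "deriv (Meta \<xi>1 \<Pi>1) A" "deriv (Meta \<xi>2 \<Pi>2) B" "deriv (fill X (Meta z (D1 @ [TF A, TF B] @ D2))) D"
  shows "deriv (fill X (Meta (\<xi>1 + \<xi>2 + z) (D1 @ (\<Pi>1 @ \<Pi>2) @ D2))) D"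
proof -
  have "deriv (fill X (Meta (\<xi>1 + z) ((D1 @ \<Pi>1) @ [TF B] @ D2))) D"
    using cut_admissibleD[OF assms(1,3), of X z D1 "[TF B] @ D2"] assms(5) by simp
  from cut_admissibleD[OF assms(2,4) this] show ?thesis
    by (simp add: ac_simps)
qed

lemma principal_cut_Diam:
  assumes "cut_admissible A" "deriv M A" "deriv (fill X (Meta z (D1 @ [Br (Meta {#} [TF A])] @ D2))) B"
  shows "deriv (fill X (Meta z (D1 @ [Br M] @ D2))) B"
proof -
  obtain \<xi> \<Pi> where M: "M = Meta \<xi> \<Pi>" by (cases M)
  have "deriv (fill (ctx_comp X (In z D1 Hole D2)) (Meta {#} ([] @ [TF A] @ []))) B"
    using assms(3) by (simp add: fill_ctx_comp)
  from cut_admissibleD[OF assms(1) assms(2)[unfolded M] this] show ?thesis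
    by (simp add: fill_ctx_comp M)
qed

lemma principal_cut_Bang:
  assumes "cut_admissible A" "deriv (Meta \<xi> []) A" "\<xi> \<noteq> {#}" "deriv (fill X (Meta (z + {#A#}) (G1 @ G2))) B"
  shows "deriv (fill X (Meta (z + \<xi>) (G1 @ G2))) B"
proof -
  have "stoups_subst A \<xi> (fill X (Meta (z + {#A#}) (G1 @ [] @ G2))) (fill X (Meta (z + \<xi>) (G1 @ [] @ G2)))"
    by (intro stoups_subst_fill stoups_subst_ctx_refl stoups_subst_Meta stoup_subst_add stoup_subst_refl
        stoup_subst_here list_all2_stoups_subst_refl)
  moreover have "cut_from (Meta \<xi> []) A"
    using assms(1,2) unfolding cut_admissible_def by blast
  ultimately show ?thesis using deriv_stoups_subst[OF _ assms(3,4)] by simp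
qed

lemma deriv_repl_context_rule:
  assumes "repl_meta F N (fill X (Meta w (D1 @ S @ D2))) M'"
    and IH1: "\<And>M'. repl_meta F N (fill X (Meta wT (D1 @ T @ D2))) M' \<Longrightarrow> deriv M' C"
    and IH2: "\<And>M'. repl_meta F N (fill X (Meta wU (D1 @ U @ D2))) M' \<Longrightarrow> deriv M' C"
    and rule: "\<And>Y e D1' D2'. deriv (fill Y (Meta (e + wT) (D1' @ T @ D2'))) C \<Longrightarrow>
      deriv (fill Y (Meta (e + wU) (D1' @ U @ D2'))) C \<Longrightarrow> deriv (fill Y (Meta (e + w) (D1' @ S @ D2'))) C"
    and principal: "\<And>e L. repl_seq F N S e L \<Longrightarrow> deriv (fill X (Meta (e + w) (D1 @ L @ D2))) C"
  shows "deriv M' C"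
  using assms(1)
proof (cases rule: repl_meta_fill_cases)
  case (outside Y e D1' D2')
  have "deriv (fill Y (Meta (e + w) (D1' @ S @ D2'))) C"
    using rule IH1[OF outside(2)] IH2[OF outside(2)] .
  then show ?thesis using outside(1) by simp
next
  case (inside e L)
  then show ?thesis using principal by simp
qed

lemma deriv_repl_right_intro:
  assumes smaller: "\<And>A. size A < size F \<Longrightarrow> cut_admissible A" and N: "right_intro N F"
  shows "deriv M C \<Longrightarrow> repl_meta F N M M' \<Longrightarrow> deriv M' C"
proof (induction arbitrary: M' rule: deriv.induct)
  case (ax A)
  then obtain e L where "repl_seq F N [TF A] e L" "M' = Meta (e + {#}) L"
    by (auto simp: repl_meta_Meta)
  then show ?case using right_intro_deriv[OF N] by (simp add: repl_seq_single_TF)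
next
  case oneR
  then show ?case by (simp add: repl_meta_Meta repl_seq_Nil)
next
  case (rdivL z1 G B X z2 D1 C D2 D)
  from rdivL.prems have "repl_meta F N (fill X (Meta (z1 + z2) (D1 @ ([TF (RDiv C B)] @ G) @ D2))) M'"
    by simp
  then show ?case
  proof (rule deriv_repl_context_rule[where T = "[TF C]" and U = "[TF C]" and wT = z2 and wU = z2])
    fix e L assume "repl_seq F N ([TF (RDiv C B)] @ G) e L"
    then show "deriv (fill X (Meta (e + (z1 + z2)) (D1 @ L @ D2))) D"
    proof (cases rule: repl_seq_append_cases)
      case (left L')
      then have F: "F = RDiv C B" "N = Meta e L'" by (simp_all add: repl_seq_single_TF)
      with N have "deriv (Meta e (L' @ [TF B])) C" by (auto elim: right_intro_RDivE)
      with principal_cut_RDiv[OF smaller smaller _ rdivL.hyps(1,2)] show ?thesis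
        using F(1) left(2) by simp
    next
      case (right G')
      then have "deriv (Meta (e + z1) G') B" using rdivL.IH(1) by (simp add: repl_meta_Meta)
      from deriv.rdivL[OF this rdivL.hyps(2)] show ?thesis using right(2) by (simp add: ac_simps)
    qed
  next
    fix Y e D1' D2'
    assume "deriv (fill Y (Meta (e + z2) (D1' @ [TF C] @ D2'))) D"
    from deriv.rdivL[OF rdivL.hyps(1) this]
    show "deriv (fill Y (Meta (e + (z1 + z2)) (D1' @ ([TF (RDiv C B)] @ G) @ D2'))) D" by (simp add: ac_simps)
  qed (use rdivL.IH(2) in simp_all)
next
  case (rdivR z G B C)
  from rdivR.prems obtain e G' where "repl_seq F N G e G'" "M' = Meta (e + z) G'"
    by (auto simp: repl_meta_Meta)
  then show ?case
    using rdivR.IH[of "Meta (e + z) (G' @ [TF B])"] deriv.rdivR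
    by (simp add: repl_meta_Meta repl_seq_append_left)
next
  case (ldivL z1 G A X z2 D1 C D2 D)
  from ldivL.prems have "repl_meta F N (fill X (Meta (z1 + z2) (D1 @ (G @ [TF (LDiv A C)]) @ D2))) M'"
    by simp
  then show ?case
  proof (rule deriv_repl_context_rule[where T = "[TF C]" and U = "[TF C]" and wT = z2 and wU = z2])
    fix e L assume "repl_seq F N (G @ [TF (LDiv A C)]) e L"
    then show "deriv (fill X (Meta (e + (z1 + z2)) (D1 @ L @ D2))) D"
    proof (cases rule: repl_seq_append_cases)
      case (right L')
      then have F: "F = LDiv A C" "N = Meta e L'" by (simp_all add: repl_seq_single_TF)
      with N have "deriv (Meta e (TF A # L')) C" by (auto elim: right_intro_LDivE)
      with principal_cut_LDiv[OF smaller smaller _ ldivL.hyps(1,2)] show ?thesis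
        using F(1) right(2) by simp
    next
      case (left G')
      then have "deriv (Meta (e + z1) G') A" using ldivL.IH(1) by (simp add: repl_meta_Meta)
      from deriv.ldivL[OF this ldivL.hyps(2)] show ?thesis using left(2) by (simp add: ac_simps)
    qed
  next
    fix Y e D1' D2'
    assume "deriv (fill Y (Meta (e + z2) (D1' @ [TF C] @ D2'))) D"
    from deriv.ldivL[OF ldivL.hyps(1) this]
    show "deriv (fill Y (Meta (e + (z1 + z2)) (D1' @ (G @ [TF (LDiv A C)]) @ D2'))) D" by (simp add: ac_simps)
  qed (use ldivL.IH(2) in simp_all)
next
  case (ldivR z A G C)
  from ldivR.prems obtain e G' where "repl_seq F N G e G'" "M' = Meta (e + z) G'"
    by (auto simp: repl_meta_Meta)
  then show ?case
    using ldivR.IH[of "Meta (e + z) (TF A # G')"] deriv.ldivR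
    by (simp add: repl_meta_Meta repl_seq_append_right[of _ _ G e G' "[TF A]", simplified])
next
  case (prodL X z D1 A B D2 D)
  show ?case
  proof (rule deriv_repl_context_rule[OF prodL.prems,
        where T = "[TF A, TF B]" and U = "[TF A, TF B]" and wT = z and wU = z])
    fix e L assume "repl_seq F N [TF (Prod A B)] e L"
    then have F: "F = Prod A B" "N = Meta e L" by (simp_all add: repl_seq_single_TF)
    with N obtain \<xi>1 \<Pi>1 \<xi>2 \<Pi>2 where "e = \<xi>1 + \<xi>2" "L = \<Pi>1 @ \<Pi>2"
      "deriv (Meta \<xi>1 \<Pi>1) A" "deriv (Meta \<xi>2 \<Pi>2) B"
      by (auto elim: right_intro_ProdE)
    with principal_cut_Prod[OF smaller smaller _ _ prodL.hyps]
    show "deriv (fill X (Meta (e + z) (D1 @ L @ D2))) D" using F(1) by simp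
  qed (use prodL.IH deriv.prodL in simp_all)
next
  case (prodR z1 D A z2 G B)
  from prodR.prems obtain e L where L: "repl_seq F N (D @ G) e L" "M' = Meta (e + (z1 + z2)) L"
    by (auto simp: repl_meta_Meta)
  from L(1) show ?case
  proof (cases rule: repl_seq_append_cases)
    case (left D')
    then have "deriv (Meta (e + z1) D') A" using prodR.IH(1) by (simp add: repl_meta_Meta)
    from deriv.prodR[OF this prodR.hyps(2)] show ?thesis using left(2) L(2) by (simp add: ac_simps)
  next
    case (right G')
    then have "deriv (Meta (e + z2) G') B" using prodR.IH(2) by (simp add: repl_meta_Meta)
    from deriv.prodR[OF prodR.hyps(1) this] show ?thesis using right(2) L(2) by (simp add: ac_simps)
  qed
next
  case (oneL X z D1 D2 A)
  show ?case
  proof (rule deriv_repl_context_rule[OF oneL.prems, where T = "[]" and U = "[]" and wT = z and wU = z])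
    fix e L assume "repl_seq F N [TF One] e L"
    with N have "e = {#}" "L = []" by (auto simp: repl_seq_single_TF elim: right_intro_OneE)
    then show "deriv (fill X (Meta (e + z) (D1 @ L @ D2))) A" using oneL.hyps by simp
  qed (use oneL.IH deriv.oneL in simp_all)
next
  case (disjL X z D1 A1 D2 C A2)
  show ?case
  proof (rule deriv_repl_context_rule[OF disjL.prems,
        where T = "[TF A1]" and U = "[TF A2]" and wT = z and wU = z])
    fix e L assume "repl_seq F N [TF (Disj A1 A2)] e L"
    then have F: "F = Disj A1 A2" "N = Meta e L" by (simp_all add: repl_seq_single_TF)
    with N have "deriv (Meta e L) A1 \<or> deriv (Meta e L) A2" by (auto elim: right_intro_DisjE)
    then show "deriv (fill X (Meta (e + z) (D1 @ L @ D2))) C"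
      using cut_admissibleD[OF smaller _ disjL.hyps(1)] cut_admissibleD[OF smaller _ disjL.hyps(2)] F(1)
      by auto
  qed (use disjL.IH deriv.disjL in simp_all)
next
  case (disjR1 M A1 A2)
  then show ?case by (blast intro: deriv.disjR1)
next
  case (disjR2 M A2 A1)
  then show ?case by (blast intro: deriv.disjR2)
next
  case (conjL1 X z D1 A1 D2 C A2)
  show ?case
  proof (rule deriv_repl_context_rule[OF conjL1.prems,
        where T = "[TF A1]" and U = "[TF A1]" and wT = z and wU = z])
    fix e L assume "repl_seq F N [TF (Conj A1 A2)] e L"
    then have F: "F = Conj A1 A2" "N = Meta e L" by (simp_all add: repl_seq_single_TF)
    with N have "deriv (Meta e L) A1" by (auto elim: right_intro_ConjE)
    then show "deriv (fill X (Meta (e + z) (D1 @ L @ D2))) C"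
      using cut_admissibleD[OF smaller _ conjL1.hyps] F(1) by simp
  qed (use conjL1.IH deriv.conjL1 in simp_all)
next
  case (conjL2 X z D1 A2 D2 C A1)
  show ?case
  proof (rule deriv_repl_context_rule[OF conjL2.prems,
        where T = "[TF A2]" and U = "[TF A2]" and wT = z and wU = z])
    fix e L assume "repl_seq F N [TF (Conj A1 A2)] e L"
    then have F: "F = Conj A1 A2" "N = Meta e L" by (simp_all add: repl_seq_single_TF)
    with N have "deriv (Meta e L) A2" by (auto elim: right_intro_ConjE)
    then show "deriv (fill X (Meta (e + z) (D1 @ L @ D2))) C"
      using cut_admissibleD[OF smaller _ conjL2.hyps] F(1) by simp
  qed (use conjL2.IH deriv.conjL2 in simp_all)
next
  case (conjR M A1 A2)
  then show ?case by (blast intro: deriv.conjR)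
next
  case (boxinvL X z D1 A D2 B)
  show ?case
  proof (rule deriv_repl_context_rule[OF boxinvL.prems,
        where T = "[TF A]" and U = "[TF A]" and wT = z and wU = z])
    fix e L assume "repl_seq F N [Br (Meta {#} [TF (BoxInv A)])] e L"
    then have F: "F = BoxInv A" "e = {#}" "L = [Br N]"
      by (auto simp: repl_seq_single repl_tree_Br repl_meta_Meta repl_seq_single_TF repl_tree_TF)
    with N have "deriv (Meta {#} [Br N]) A" by (auto elim: right_intro_BoxInvE)
    from cut_admissibleD[OF smaller this boxinvL.hyps]
    show "deriv (fill X (Meta (e + z) (D1 @ L @ D2))) B" using F by simp
  qed (use boxinvL.IH deriv.boxinvL in simp_all)
next
  case (boxinvR M A)
  then show ?case using repl_Meta[OF repl_Br, of F N M M' "{#}" "[]" "[]"] deriv.boxinvR by simp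
next
  case (diamL X z D1 A D2 B)
  show ?case
  proof (rule deriv_repl_context_rule[OF diamL.prems,
        where T = "[Br (Meta {#} [TF A])]" and U = "[Br (Meta {#} [TF A])]" and wT = z and wU = z])
    fix e L assume "repl_seq F N [TF (Diam A)] e L"
    then have F: "F = Diam A" "N = Meta e L" by (simp_all add: repl_seq_single_TF)
    with N obtain M0 where "e = {#}" "L = [Br M0]" "deriv M0 A" by (auto elim: right_intro_DiamE)
    then show "deriv (fill X (Meta (e + z) (D1 @ L @ D2))) B"
      using principal_cut_Diam[OF smaller _ diamL.hyps] F(1) by simp
  qed (use diamL.IH deriv.diamL in simp_all)
next
  case (diamR M A)
  then obtain M'' where "M' = Meta {#} [Br M'']" "repl_meta F N M M''"
    by (auto simp: repl_meta_Meta repl_seq_single repl_tree_Br)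
  then show ?case using diamR.IH deriv.diamR by simp
next
  case (bangL X z A G1 G2 B)
  show ?case
  proof (rule deriv_repl_context_rule[OF bangL.prems,
        where T = "[]" and U = "[]" and wT = "z + {#A#}" and wU = "z + {#A#}"])
    fix e L assume "repl_seq F N [TF (Bang A)] e L"
    then have F: "F = Bang A" "N = Meta e L" by (simp_all add: repl_seq_single_TF)
    with N have "L = []" "e \<noteq> {#}" "deriv (Meta e []) A" by (auto elim: right_intro_BangE)
    then show "deriv (fill X (Meta (e + z) (G1 @ L @ G2))) B"
      using principal_cut_Bang[OF smaller _ _ bangL.hyps] F(1) by (simp add: add.commute)
  qed (use bangL.IH deriv.bangL in \<open>simp_all add: ac_simps\<close>)
next
  case (bangP X z G1 A G2 B)
  from bangP.prems have "repl_meta F N (fill X (Meta (z + {#A#}) (G1 @ [] @ G2))) M'" by simp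
  then show ?case
    by (rule deriv_repl_context_rule[where T = "[TF A]" and U = "[TF A]" and wT = z and wU = z])
      (use bangP.IH deriv.bangP in \<open>simp_all add: repl_seq_Nil ac_simps\<close>)
next
  case (bangR' z B)
  then show ?case by (simp add: repl_meta_Meta repl_seq_Nil)
next
  case (bangC' X z1 z2 G1 z' G2 G3 C)
  let ?T = "[Br (Meta (z' + z2) G2)]"
  show ?case
  proof (rule deriv_repl_context_rule[OF bangC'.prems,
        where T = ?T and U = ?T and wT = "z1 + z2" and wU = "z1 + z2"])
    fix e L assume "repl_seq F N G2 e L"
    then have "repl_seq F N ?T {#} [Br (Meta (e + (z' + z2)) L)]"
      by (simp add: repl_seq_single repl_tree_Br repl_meta_Meta)
    from bangC'.IH[OF repl_meta_fill[OF repl_seq_append_right[OF repl_seq_append_left[OF this]]]]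
    have "deriv (fill X (Meta (z1 + z2) (G1 @ [Br (Meta ((e + z') + z2) L)] @ G3))) C"
      by (simp add: ac_simps)
    from deriv.bangC'[OF this bangC'.hyps(2)]
    show "deriv (fill X (Meta (e + (z1 + z2 + z')) (G1 @ L @ G3))) C" by (simp add: ac_simps)
  next
    fix Y e D1' D2'
    assume "deriv (fill Y (Meta (e + (z1 + z2)) (D1' @ ?T @ D2'))) C"
    then have "deriv (fill Y (Meta ((e + z1) + z2) (D1' @ ?T @ D2'))) C" by (simp add: ac_simps)
    from deriv.bangC'[OF this bangC'.hyps(2)]
    show "deriv (fill Y (Meta (e + (z1 + z2 + z')) (D1' @ G2 @ D2'))) C" by (simp add: ac_simps)
  qed (use bangC'.IH in simp_all)
qed

lemma cut_from_right_intro: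
  "(\<And>A. size A < size F \<Longrightarrow> cut_admissible A) \<Longrightarrow> right_intro N F \<Longrightarrow> cut_from N F"
  unfolding cut_from_def using deriv_repl_right_intro by blast

lemma cut_from_axiom: "cut_from (Meta {#} [TF A]) A"
  unfolding cut_from_def by (auto simp: repl_meta_iff_fill)

lemma cut_from_context_rule:
  assumes IH1: "cut_from (fill X (Meta wT (D1 @ T @ D2))) F"
    and IH2: "cut_from (fill X (Meta wU (D1 @ U @ D2))) F"
    and rule: "\<And>Y e D1' D2' C. deriv (fill Y (Meta (e + wT) (D1' @ T @ D2'))) C \<Longrightarrow>
      deriv (fill Y (Meta (e + wU) (D1' @ U @ D2'))) C \<Longrightarrow> deriv (fill Y (Meta (e + w) (D1' @ S @ D2'))) C"
  shows "cut_from (fill X (Meta w (D1 @ S @ D2))) F"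
  unfolding cut_from_def
proof (intro allI impI)
  fix M M' C
  assume M: "deriv M C" and repl: "repl_meta F (fill X (Meta w (D1 @ S @ D2))) M M'"
  from repl show "deriv M' C"
  proof (cases rule: repl_meta_by_fill)
    case (plug Y e D1' D2')
    have "deriv (fill Y (Meta (e + wT) (D1' @ T @ D2'))) C" "deriv (fill Y (Meta (e + wU) (D1' @ U @ D2'))) C"
      using IH1 IH2 M plug(2) unfolding cut_from_def by blast+
    then show ?thesis using rule plug(1) by simp
  qed
qed

lemma cut_from_deriv: "deriv N F \<Longrightarrow> (\<And>A. size A < size F \<Longrightarrow> cut_admissible A) \<Longrightarrow> cut_from N F"
proof (induction rule: deriv.induct)
  case (ax A)
  show ?case by (rule cut_from_axiom)
next
  case (rdivL z1 G B X z2 D1 C D2 D)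
  have "cut_from (fill X (Meta (z1 + z2) (D1 @ ([TF (RDiv C B)] @ G) @ D2))) D"
  proof (rule cut_from_context_rule[where T = "[TF C]" and U = "[TF C]" and wT = z2 and wU = z2])
    fix Y e D1' D2' C'
    assume "deriv (fill Y (Meta (e + z2) (D1' @ [TF C] @ D2'))) C'"
    from deriv.rdivL[OF rdivL.hyps(1) this]
    show "deriv (fill Y (Meta (e + (z1 + z2)) (D1' @ ([TF (RDiv C B)] @ G) @ D2'))) C'" by (simp add: ac_simps)
  qed (use rdivL in simp_all)
  then show ?case by simp
next
  case (ldivL z1 G A X z2 D1 C D2 D)
  have "cut_from (fill X (Meta (z1 + z2) (D1 @ (G @ [TF (LDiv A C)]) @ D2))) D"
  proof (rule cut_from_context_rule[where T = "[TF C]" and U = "[TF C]" and wT = z2 and wU = z2])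
    fix Y e D1' D2' C'
    assume "deriv (fill Y (Meta (e + z2) (D1' @ [TF C] @ D2'))) C'"
    from deriv.ldivL[OF ldivL.hyps(1) this]
    show "deriv (fill Y (Meta (e + (z1 + z2)) (D1' @ (G @ [TF (LDiv A C)]) @ D2'))) C'" by (simp add: ac_simps)
  qed (use ldivL in simp_all)
  then show ?case by simp
next
  case (prodL X z D1 A B D2 D)
  show ?case
    by (rule cut_from_context_rule[where T = "[TF A, TF B]" and U = "[TF A, TF B]" and wT = z and wU = z])
      (use prodL deriv.prodL in simp_all)
next
  case (oneL X z D1 D2 A)
  show ?case
    by (rule cut_from_context_rule[where T = "[]" and U = "[]" and wT = z and wU = z])
      (use oneL deriv.oneL in simp_all)
next
  case (disjL X z D1 A1 D2 C A2)
  show ?case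
    by (rule cut_from_context_rule[where T = "[TF A1]" and U = "[TF A2]" and wT = z and wU = z])
      (use disjL deriv.disjL in simp_all)
next
  case (conjL1 X z D1 A1 D2 C A2)
  show ?case
    by (rule cut_from_context_rule[where T = "[TF A1]" and U = "[TF A1]" and wT = z and wU = z])
      (use conjL1 deriv.conjL1 in simp_all)
next
  case (conjL2 X z D1 A2 D2 C A1)
  show ?case
    by (rule cut_from_context_rule[where T = "[TF A2]" and U = "[TF A2]" and wT = z and wU = z])
      (use conjL2 deriv.conjL2 in simp_all)
next
  case (boxinvL X z D1 A D2 B)
  show ?case
    by (rule cut_from_context_rule[where T = "[TF A]" and U = "[TF A]" and wT = z and wU = z])
      (use boxinvL deriv.boxinvL in simp_all)
next
  case (diamL X z D1 A D2 B)
  show ?case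
    by (rule cut_from_context_rule[where T = "[Br (Meta {#} [TF A])]" and U = "[Br (Meta {#} [TF A])]"
          and wT = z and wU = z])
      (use diamL deriv.diamL in simp_all)
next
  case (bangL X z A G1 G2 B)
  show ?case
    by (rule cut_from_context_rule[where T = "[]" and U = "[]" and wT = "z + {#A#}" and wU = "z + {#A#}"])
      (use bangL deriv.bangL in \<open>simp_all add: ac_simps\<close>)
next
  case (bangP X z G1 A G2 B)
  have "cut_from (fill X (Meta (z + {#A#}) (G1 @ [] @ G2))) B"
    by (rule cut_from_context_rule[where T = "[TF A]" and U = "[TF A]" and wT = z and wU = z])
      (use bangP deriv.bangP in \<open>simp_all add: ac_simps\<close>)
  then show ?case by simp
next
  case (bangC' X z1 z2 G1 z' G2 G3 C)
  let ?T = "[Br (Meta (z' + z2) G2)]"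
  show ?case
  proof (rule cut_from_context_rule[where T = ?T and U = ?T and wT = "z1 + z2" and wU = "z1 + z2"])
    fix Y e D1' D2' C'
    assume "deriv (fill Y (Meta (e + (z1 + z2)) (D1' @ ?T @ D2'))) C'"
    then have "deriv (fill Y (Meta ((e + z1) + z2) (D1' @ ?T @ D2'))) C'" by (simp add: ac_simps)
    from deriv.bangC'[OF this bangC'.hyps(2)]
    show "deriv (fill Y (Meta (e + (z1 + z2 + z')) (D1' @ G2 @ D2'))) C'" by (simp add: ac_simps)
  qed (use bangC' in simp_all)
qed (auto intro: cut_from_right_intro right_intro.intros)

lemma cut_admissible_all: "cut_admissible A"
proof (induction A rule: measure_induct_rule[of size])
  case (less A)
  show ?case unfolding cut_admissible_def using cut_from_deriv[OF _ less] by blast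
qed

theorem theorem2:
  assumes "deriv (Meta xi Pi) A"
      and "deriv (fill X (Meta z (G1 @ [TF A] @ G2))) C"
  shows "deriv (fill X (Meta (xi + z) (G1 @ Pi @ G2))) C"
  using cut_admissibleD[OF cut_admissible_all assms] .

end
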